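(* Let $f:[-1,1]^n \to [-1,1]$ be a multilinear function and let $D$ be a distribution over $\mathbb{R}$ with mean $\mu$ and variance $\sigma^2 < 1-\mu^2$. Then for every nonnegative integer $d$ there exists a polynomial $f^{\le d}$ of degree at most $d$ such that $$\mathbb{E}_{x \sim D^{\otimes n}}\big[(f(x) - f^{\le d}(x))^2\big] \le \Big( \frac{\sigma^2}{1-\mu^2} \Big)^d .$$
   Context: A function on $[-1,1]^n$ is multilinear if it is a polynomial of degree at most one in each variable. $D^{\otimes n}$ is the product distribution with i.i.d. coordinates of law $D$. *)

theory Defs
  imports "HOL-Probability.Probability"
begin

text \<open>Points of R^n are represented as functions nat => real; only coordinates 0..n-1 matter.\<close>

definition multilinear :: "nat \<Rightarrow> ((nat \<Rightarrow> real) \<Rightarrow> real) \<Rightarrow> bool" where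
  "multilinear n f \<longleftrightarrow>
     (\<exists>c :: nat set \<Rightarrow> real. \<forall>x. f x = (\<Sum>S\<in>Pow {..<n}. c S * (\<Prod>i\<in>S. x i)))"

definition multi_indices :: "nat \<Rightarrow> nat \<Rightarrow> (nat \<Rightarrow> nat) set" where
  "multi_indices n d = {\<alpha>. (\<forall>i. n \<le> i \<longrightarrow> \<alpha> i = 0) \<and> sum \<alpha> {..<n} \<le> d}"

definition poly_deg_le :: "nat \<Rightarrow> nat \<Rightarrow> ((nat \<Rightarrow> real) \<Rightarrow> real) \<Rightarrow> bool" where
  "poly_deg_le n d p \<longleftrightarrow>
     (\<exists>c :: (nat \<Rightarrow> nat) \<Rightarrow> real.
        \<forall>x. p x = (\<Sum>\<alpha>\<in>multi_indices n d. c \<alpha> * (\<Prod>i<n. x i ^ \<alpha> i)))"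

end

theory Submission
  imports Defs
begin

text \<open>Expand f in centred monomials, f x = \<Sum>T\<subseteq>{..<n}. g(T) \<Prod>i\<in>T. (x i - \<mu>). Under D^n the
  centred monomials are orthogonal with squared norms \<sigma>^(2|T|), so dropping the terms with
  |T| > d costs exactly the sum of g(T)^2 \<sigma>^(2|T|) over |T| > d. They are just as orthogonal
  under the {-1,1}-valued distribution with mean \<mu>, now with squared norms (1 - \<mu>^2)^|T|; as
  |f| \<le> 1 on its support, the sum of g(T)^2 (1 - \<mu>^2)^|T| over all T is at most 1. For |T| > d
  the two weights differ by the factor (\<sigma>^2 / (1 - \<mu>^2))^|T| \<le> (\<sigma>^2 / (1 - \<mu>^2))^d.\<close>

definition centered_monomial :: "real \<Rightarrow> nat set \<Rightarrow> (nat \<Rightarrow> real) \<Rightarrow> real" where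
  "centered_monomial m T x = (\<Prod>i\<in>T. x i - m)"

lemma prod_if_mem_eq:
  assumes "finite I" "T \<subseteq> I"
  shows "(\<Prod>i\<in>I. if i \<in> T then h i else 1) = prod h T"
  using prod.inter_restrict[OF assms(1), of h T] assms(2) by (simp add: Int_absorb1)

lemma centered_monomial_mult_eq_prod:
  assumes "finite I" "T \<subseteq> I" "U \<subseteq> I"
  shows "centered_monomial m T x * centered_monomial m U x =
    (\<Prod>i\<in>I. (if i \<in> T then x i - m else 1) * (if i \<in> U then x i - m else 1))"
  by (simp add: prod.distrib prod_if_mem_eq assms centered_monomial_def)

context
  fixes M :: "real measure" and m v :: real
  assumes M_prob: "prob_space M"
    and M_square_integrable: "integrable M (\<lambda>t. t\<^sup>2)"
    and M_ident_measurable: "(\<lambda>t. t) \<in> borel_measurable M"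
    and m_eq: "m = (\<integral>t. t \<partial>M)"
    and v_eq: "v = (\<integral>t. (t - m)\<^sup>2 \<partial>M)"
begin

lemma integral_centered_monomial_mult:
  assumes "finite I" "T \<subseteq> I" "U \<subseteq> I"
  shows "integrable (PiM I (\<lambda>_. M)) (\<lambda>x. centered_monomial m T x * centered_monomial m U x)"
    and "(\<integral>x. centered_monomial m T x * centered_monomial m U x \<partial>PiM I (\<lambda>_. M)) =
           (if T = U then v ^ card T else 0)"
proof -
  interpret prob_space M by (fact M_prob)
  define h where "h i = (\<lambda>t. (if i \<in> T then t - m else 1) * (if i \<in> U then t - m else 1))" for i
  have id_integrable: "integrable M (\<lambda>t. t)"
    by (rule square_integrable_imp_integrable[OF M_ident_measurable M_square_integrable])
  interpret P: product_prob_space "\<lambda>_. M" by unfold_locales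
  have "integrable M (\<lambda>t. t\<^sup>2 - 2 * m * t + m\<^sup>2)"
    using M_square_integrable id_integrable by simp
  then have "integrable M (\<lambda>t. (t - m) * (t - m))"
    by (simp add: power2_eq_square algebra_simps)
  then have h_integrable: "integrable M (h i)" for i
    using id_integrable by (cases "i \<in> T"; cases "i \<in> U") (simp_all add: h_def)
  have v_eq_integral_square: "integral\<^sup>L M (\<lambda>t. (t - m) * (t - m)) = v"
    unfolding v_eq by (simp only: power2_eq_square)
  have integral_h: "integral\<^sup>L M (h i) =
      (if i \<in> T \<and> i \<in> U then v else if i \<in> T \<or> i \<in> U then 0 else 1)" for i
    using id_integrable by (auto simp: h_def m_eq[symmetric] v_eq_integral_square prob_space)
  have product_eq: "(\<lambda>x. centered_monomial m T x * centered_monomial m U x) = (\<lambda>x. \<Prod>i\<in>I. h i (x i))"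
    using centered_monomial_mult_eq_prod[OF assms] by (simp add: h_def)
  show "integrable (PiM I (\<lambda>_. M)) (\<lambda>x. centered_monomial m T x * centered_monomial m U x)"
    unfolding product_eq using assms(1) h_integrable by (rule P.product_integrable_prod)
  have "(\<integral>x. centered_monomial m T x * centered_monomial m U x \<partial>PiM I (\<lambda>_. M)) =
      (\<Prod>i\<in>I. integral\<^sup>L M (h i))"
    unfolding product_eq using assms(1) h_integrable by (rule P.product_integral_prod)
  also have "\<dots> = (if T = U then v ^ card T else 0)"
  proof (cases "T = U")
    case True
    show ?thesis
      using assms by (simp add: True integral_h prod_if_mem_eq finite_subset cong: if_cong)
  next
    case False
    then obtain i where "i \<in> T \<and> i \<notin> U \<or> i \<in> U \<and> i \<notin> T"
      by blast
    then have "i \<in> I" "integral\<^sup>L M (h i) = 0"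
      using assms by (auto simp: integral_h)
    then show ?thesis
      using False assms(1) by (auto intro: prod_zero)
  qed
  finally show "(\<integral>x. centered_monomial m T x * centered_monomial m U x \<partial>PiM I (\<lambda>_. M)) =
      (if T = U then v ^ card T else 0)" .
qed

lemma integral_centered_expansion_square:
  assumes "finite I"
  shows "integrable (PiM I (\<lambda>_. M)) (\<lambda>x. (\<Sum>T\<in>Pow I. a T * centered_monomial m T x)\<^sup>2)"
    and "(\<integral>x. (\<Sum>T\<in>Pow I. a T * centered_monomial m T x)\<^sup>2 \<partial>PiM I (\<lambda>_. M)) =
           (\<Sum>T\<in>Pow I. (a T)\<^sup>2 * v ^ card T)"
proof -
  have square_eq: "(\<lambda>x. (\<Sum>T\<in>Pow I. a T * centered_monomial m T x)\<^sup>2) =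
      (\<lambda>x. \<Sum>T\<in>Pow I. \<Sum>U\<in>Pow I. a T * a U * (centered_monomial m T x * centered_monomial m U x))"
    by (auto simp: power2_eq_square sum_product algebra_simps)
  note products = integral_centered_monomial_mult[OF assms]
  have inner_integrable: "integrable (PiM I (\<lambda>_. M))
      (\<lambda>x. \<Sum>U\<in>Pow I. a T * a U * (centered_monomial m T x * centered_monomial m U x))"
    if "T \<in> Pow I" for T
    using products(1) that by (auto intro!: Bochner_Integration.integrable_sum)
  show "integrable (PiM I (\<lambda>_. M)) (\<lambda>x. (\<Sum>T\<in>Pow I. a T * centered_monomial m T x)\<^sup>2)"
    unfolding square_eq using inner_integrable by (rule Bochner_Integration.integrable_sum)
  have "(\<integral>x. (\<Sum>T\<in>Pow I. a T * centered_monomial m T x)\<^sup>2 \<partial>PiM I (\<lambda>_. M)) =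
      (\<Sum>T\<in>Pow I. \<Sum>U\<in>Pow I. a T * a U * (if T = U then v ^ card T else 0))"
    unfolding square_eq using products by (simp add: inner_integrable)
  also have "\<dots> = (\<Sum>T\<in>Pow I. (a T)\<^sup>2 * v ^ card T)"
    using assms by (simp add: power2_eq_square if_distrib cong: if_cong)
  finally show "(\<integral>x. (\<Sum>T\<in>Pow I. a T * centered_monomial m T x)\<^sup>2 \<partial>PiM I (\<lambda>_. M)) =
      (\<Sum>T\<in>Pow I. (a T)\<^sup>2 * v ^ card T)" .
qed

end

lemma prod_eq_sum_centered_monomials:
  assumes "finite I" "S \<subseteq> I"
  shows "(\<Prod>i\<in>S. x i) =
    (\<Sum>T\<in>Pow I. (if T \<subseteq> S then m ^ card (S - T) else 0) * centered_monomial m T x)"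
proof -
  have "(\<Prod>i\<in>S. x i) = (\<Prod>i\<in>S. (x i - m) + m)"
    by simp
  also have "\<dots> = (\<Sum>T\<in>Pow S. (\<Prod>i\<in>T. x i - m) * (\<Prod>i\<in>S - T. m))"
    using finite_subset[OF assms(2,1)] by (rule prod_add)
  also have "\<dots> = (\<Sum>T\<in>Pow I \<inter> Pow S. centered_monomial m T x * m ^ card (S - T))"
    by (simp add: centered_monomial_def Int_absorb1[OF Pow_mono[OF assms(2)]])
  also have "\<dots> = (\<Sum>T\<in>Pow I. if T \<in> Pow S then centered_monomial m T x * m ^ card (S - T) else 0)"
    using assms(1) by (simp add: sum.inter_restrict)
  also have "\<dots> = (\<Sum>T\<in>Pow I. (if T \<subseteq> S then m ^ card (S - T) else 0) * centered_monomial m T x)"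
    by (intro sum.cong) auto
  finally show ?thesis .
qed

lemma multilinear_centered_expansion:
  assumes "multilinear n f"
  obtains g where "\<And>x. f x = (\<Sum>T\<in>Pow {..<n}. g T * centered_monomial m T x)"
proof -
  obtain c where c: "\<And>x. f x = (\<Sum>S\<in>Pow {..<n}. c S * (\<Prod>i\<in>S. x i))"
    using assms unfolding multilinear_def by blast
  define e where "e S T = (if T \<subseteq> S then m ^ card (S - T) else 0)" for S T :: "nat set"
  have "f x = (\<Sum>T\<in>Pow {..<n}. (\<Sum>S\<in>Pow {..<n}. c S * e S T) * centered_monomial m T x)" for x
  proof -
    have "f x = (\<Sum>S\<in>Pow {..<n}. c S * (\<Sum>T\<in>Pow {..<n}. e S T * centered_monomial m T x))"
      unfolding c e_def by (intro sum.cong refl) (simp add: prod_eq_sum_centered_monomials)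
    also have "\<dots> = (\<Sum>S\<in>Pow {..<n}. \<Sum>T\<in>Pow {..<n}. c S * e S T * centered_monomial m T x)"
      by (simp add: sum_distrib_left mult.assoc)
    also have "\<dots> = (\<Sum>T\<in>Pow {..<n}. \<Sum>S\<in>Pow {..<n}. c S * e S T * centered_monomial m T x)"
      by (rule sum.swap)
    finally show ?thesis
      by (simp add: sum_distrib_right)
  qed
  then show thesis
    by (rule that)
qed

lemma poly_deg_le_zero: "poly_deg_le n d (\<lambda>x. 0)"
  unfolding poly_deg_le_def by (rule exI[of _ "\<lambda>_. 0"]) simp

lemma poly_deg_le_add:
  assumes "poly_deg_le n d p" "poly_deg_le n d q"
  shows "poly_deg_le n d (\<lambda>x. p x + q x)"
proof -
  obtain a where "\<forall>x. p x = (\<Sum>\<alpha>\<in>multi_indices n d. a \<alpha> * (\<Prod>i<n. x i ^ \<alpha> i))"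
    using assms(1) unfolding poly_deg_le_def by blast
  moreover obtain b where "\<forall>x. q x = (\<Sum>\<alpha>\<in>multi_indices n d. b \<alpha> * (\<Prod>i<n. x i ^ \<alpha> i))"
    using assms(2) unfolding poly_deg_le_def by blast
  ultimately show ?thesis
    unfolding poly_deg_le_def
    by (intro exI[of _ "\<lambda>\<alpha>. a \<alpha> + b \<alpha>"]) (simp add: sum.distrib distrib_right)
qed

lemma poly_deg_le_cmult:
  assumes "poly_deg_le n d p"
  shows "poly_deg_le n d (\<lambda>x. c * p x)"
proof -
  obtain a where "\<forall>x. p x = (\<Sum>\<alpha>\<in>multi_indices n d. a \<alpha> * (\<Prod>i<n. x i ^ \<alpha> i))"
    using assms unfolding poly_deg_le_def by blast
  then show ?thesis
    unfolding poly_deg_le_def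
    by (intro exI[of _ "\<lambda>\<alpha>. c * a \<alpha>"]) (simp add: sum_distrib_left mult.assoc)
qed

lemma poly_deg_le_sum:
  assumes "finite A" "\<And>a. a \<in> A \<Longrightarrow> poly_deg_le n d (p a)"
  shows "poly_deg_le n d (\<lambda>x. \<Sum>a\<in>A. p a x)"
  using assms by (induction A rule: finite_induct) (simp_all add: poly_deg_le_zero poly_deg_le_add)

lemma finite_multi_indices: "finite (multi_indices n d)"
proof (rule finite_subset)
  have "\<alpha> i \<le> d" if "\<alpha> \<in> multi_indices n d" "i < n" for \<alpha> i
    using that member_le_sum[of i "{..<n}" \<alpha>] unfolding multi_indices_def by simp
  then show "multi_indices n d \<subseteq>
      {\<alpha>. \<forall>i. (i \<in> {..<n} \<longrightarrow> \<alpha> i \<in> {..d}) \<and> (i \<notin> {..<n} \<longrightarrow> \<alpha> i = 0)}"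
    unfolding multi_indices_def by auto
  show "finite {\<alpha>. \<forall>i. (i \<in> {..<n} \<longrightarrow> \<alpha> i \<in> {..d}) \<and> (i \<notin> {..<n} \<longrightarrow> \<alpha> i = 0)}"
    by (intro finite_set_of_finite_funs) simp_all
qed

lemma poly_deg_le_prod_vars:
  assumes "U \<subseteq> {..<n}" "card U \<le> d"
  shows "poly_deg_le n d (\<lambda>x. \<Prod>i\<in>U. x i)"
proof -
  define \<beta> where "\<beta> i = (if i \<in> U then 1 else 0 :: nat)" for i
  have "sum \<beta> {..<n} = card U"
    using assms(1) by (simp add: \<beta>_def sum.If_cases Int_absorb1)
  then have \<beta>_mem: "\<beta> \<in> multi_indices n d"
    using assms unfolding multi_indices_def \<beta>_def by auto
  have "(\<Prod>i<n. x i ^ \<beta> i) = (\<Prod>i<n. if i \<in> U then x i else 1)" for x :: "nat \<Rightarrow> real"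
    by (intro prod.cong) (simp_all add: \<beta>_def)
  then have monomial_eq: "(\<Prod>i<n. x i ^ \<beta> i) = (\<Prod>i\<in>U. x i)" for x :: "nat \<Rightarrow> real"
    using assms(1) by (simp add: prod_if_mem_eq)
  have "(\<Sum>\<alpha>\<in>multi_indices n d. of_bool (\<alpha> = \<beta>) * (\<Prod>i<n. x i ^ \<alpha> i)) = (\<Prod>i\<in>U. x i)"
    for x :: "nat \<Rightarrow> real"
    using \<beta>_mem finite_multi_indices by (simp add: monomial_eq)
  then show ?thesis
    unfolding poly_deg_le_def by metis
qed

lemma poly_deg_le_centered_monomial:
  assumes "T \<subseteq> {..<n}" "card T \<le> d"
  shows "poly_deg_le n d (centered_monomial m T)"
proof -
  have "finite T"
    using assms(1) finite_subset by blast
  have "centered_monomial m T x = (\<Prod>i\<in>T. x i + (-m))" for x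
    by (simp add: centered_monomial_def)
  also have "\<dots> x = (\<Sum>U\<in>Pow T. (\<Prod>i\<in>U. x i) * (\<Prod>i\<in>T - U. -m))" for x
    using \<open>finite T\<close> by (rule prod_add)
  finally have expansion: "centered_monomial m T = (\<lambda>x. \<Sum>U\<in>Pow T. (-m) ^ card (T - U) * (\<Prod>i\<in>U. x i))"
    by (simp add: fun_eq_iff mult.commute)
  have "card U \<le> d" if "U \<subseteq> T" for U
    using assms(2) card_mono[OF \<open>finite T\<close> that] by linarith
  then show ?thesis
    unfolding expansion using assms(1) \<open>finite T\<close>
    by (intro poly_deg_le_sum poly_deg_le_cmult poly_deg_le_prod_vars) auto
qed

lemma poly_deg_le_truncated_centered_expansion:
  "poly_deg_le n d (\<lambda>x. \<Sum>T\<in>Pow {..<n}. (if card T \<le> d then g T else 0) * centered_monomial m T x)"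
proof (intro poly_deg_le_sum)
  fix T assume "T \<in> Pow {..<n}"
  then show "poly_deg_le n d (\<lambda>x. (if card T \<le> d then g T else 0) * centered_monomial m T x)"
    by (cases "card T \<le> d") (simp_all add: poly_deg_le_cmult poly_deg_le_centered_monomial poly_deg_le_zero)
qed simp

definition biased_sign_pmf :: "real \<Rightarrow> real pmf" where
  "biased_sign_pmf \<mu> = map_pmf (\<lambda>b. if b then 1 else -1) (bernoulli_pmf ((1 + \<mu>) / 2))"

lemma set_biased_sign_pmf: "set_pmf (biased_sign_pmf \<mu>) \<subseteq> {-1, 1}"
  by (auto simp: biased_sign_pmf_def)

lemma
  assumes "\<bar>\<mu>\<bar> \<le> 1"
  shows mean_biased_sign_pmf: "(\<integral>t. t \<partial>biased_sign_pmf \<mu>) = \<mu>"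
    and variance_biased_sign_pmf: "(\<integral>t. (t - \<mu>)\<^sup>2 \<partial>biased_sign_pmf \<mu>) = 1 - \<mu>\<^sup>2"
  using assms by (simp_all add: biased_sign_pmf_def field_simps power2_eq_square)

lemma centered_coefficients_weighted_sum_le_one:
  assumes "finite I" "\<bar>\<mu>\<bar> < 1"
    and bounded: "\<And>x. (\<forall>i\<in>I. \<bar>x i\<bar> \<le> 1) \<Longrightarrow> \<bar>\<Sum>T\<in>Pow I. g T * centered_monomial \<mu> T x\<bar> \<le> 1"
  shows "(\<Sum>T\<in>Pow I. (g T)\<^sup>2 * (1 - \<mu>\<^sup>2) ^ card T) \<le> 1"
proof -
  let ?B = "measure_pmf (biased_sign_pmf \<mu>)"
  let ?F = "\<lambda>x. \<Sum>T\<in>Pow I. g T * centered_monomial \<mu> T x"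
  have "\<bar>\<mu>\<bar> \<le> 1"
    using assms(2) by simp
  have "finite (set_pmf (biased_sign_pmf \<mu>))"
    using set_biased_sign_pmf by (rule finite_subset) simp
  then have "integrable ?B (\<lambda>t. t\<^sup>2)"
    by (rule integrable_measure_pmf_finite)
  note parseval = integral_centered_expansion_square[OF prob_space_measure_pmf this _
      mean_biased_sign_pmf[OF \<open>\<bar>\<mu>\<bar> \<le> 1\<close>, symmetric]
      variance_biased_sign_pmf[OF \<open>\<bar>\<mu>\<bar> \<le> 1\<close>, symmetric] assms(1), where a = g]
  interpret B: prob_space "PiM I (\<lambda>_. ?B)"
    by (intro prob_space_PiM prob_space_measure_pmf)
  have "AE x in PiM I (\<lambda>_. ?B). \<forall>i\<in>I. \<bar>x i\<bar> \<le> 1"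
    using assms(1)
    by (intro eventually_ball_finite ballI AE_PiM_component prob_space_measure_pmf)
       (auto simp: AE_measure_pmf_iff dest: set_biased_sign_pmf[THEN subsetD])
  then have "AE x in PiM I (\<lambda>_. ?B). (?F x)\<^sup>2 \<le> 1"
    by eventually_elim (simp add: abs_square_le_1 bounded)
  then have "(\<integral>x. (?F x)\<^sup>2 \<partial>PiM I (\<lambda>_. ?B)) \<le> (\<integral>x. 1 \<partial>PiM I (\<lambda>_. ?B))"
    using parseval(1) by (intro integral_mono_AE) auto
  then show ?thesis
    using assms(2) by (simp add: parseval(2) B.prob_space)
qed

lemma sum_truncated_weights_le:
  fixes s w :: real
  assumes "0 \<le> s" "s \<le> w" "0 < w"
  shows "(\<Sum>T\<in>A. (if card T \<le> d then 0 else g T)\<^sup>2 * s ^ card T) \<le>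
    (s / w) ^ d * (\<Sum>T\<in>A. (g T)\<^sup>2 * w ^ card T)"
proof -
  have "(if card T \<le> d then 0 else g T)\<^sup>2 * s ^ card T \<le> (s / w) ^ d * ((g T)\<^sup>2 * w ^ card T)" for T
  proof (cases "card T \<le> d")
    case False
    have "s ^ card T = (s / w) ^ card T * w ^ card T"
      using assms(3) by (simp add: power_divide)
    also have "\<dots> \<le> (s / w) ^ d * w ^ card T"
      using False assms by (intro mult_right_mono power_decreasing) auto
    finally have "(g T)\<^sup>2 * s ^ card T \<le> (g T)\<^sup>2 * ((s / w) ^ d * w ^ card T)"
      by (rule mult_left_mono) simp
    then show ?thesis
      using False by (simp add: mult_ac)
  qed (use assms in simp)
  then show ?thesis
    by (simp add: sum_distrib_left sum_mono)
qed

theorem mainTheorem4: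
  fixes n d :: nat and f :: "(nat \<Rightarrow> real) \<Rightarrow> real"
    and D :: "real measure" and \<mu> \<sigma> :: real
  assumes f_ml: "multilinear n f"
    and f_bdd: "\<And>x. (\<forall>i<n. \<bar>x i\<bar> \<le> 1) \<Longrightarrow> \<bar>f x\<bar> \<le> 1"
    and D_prob: "prob_space D"
    and D_borel: "sets D = sets borel"
    and D_sq: "integrable D (\<lambda>t. t ^ 2)"
    and D_mean: "\<mu> = (\<integral>t. t \<partial>D)"
    and D_var: "\<sigma> ^ 2 = (\<integral>t. (t - \<mu>) ^ 2 \<partial>D)"
    and var_lt: "\<sigma> ^ 2 < 1 - \<mu> ^ 2"
  shows "\<exists>p. poly_deg_le n d p \<and>
           integrable (PiM {..<n} (\<lambda>_. D)) (\<lambda>x. (f x - p x) ^ 2) \<and>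
           (\<integral>x. (f x - p x) ^ 2 \<partial>(PiM {..<n} (\<lambda>_. D))) \<le> (\<sigma> ^ 2 / (1 - \<mu> ^ 2)) ^ d"
proof -
  obtain g where f_eq: "\<And>x. f x = (\<Sum>T\<in>Pow {..<n}. g T * centered_monomial \<mu> T x)"
    using multilinear_centered_expansion[OF f_ml] by blast
  have w_pos: "0 < 1 - \<mu>\<^sup>2"
    using var_lt zero_le_power2[of \<sigma>] by linarith
  then have "\<bar>\<mu>\<bar> < 1"
    by (simp add: abs_square_less_1)
  then have coefficient_bound: "(\<Sum>T\<in>Pow {..<n}. (g T)\<^sup>2 * (1 - \<mu>\<^sup>2) ^ card T) \<le> 1"
    using f_bdd by (intro centered_coefficients_weighted_sum_le_one) (auto simp flip: f_eq)
  define p where "p x = (\<Sum>T\<in>Pow {..<n}. (if card T \<le> d then g T else 0) * centered_monomial \<mu> T x)"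
    for x
  have error_eq: "f x - p x =
      (\<Sum>T\<in>Pow {..<n}. (if card T \<le> d then 0 else g T) * centered_monomial \<mu> T x)" for x
    unfolding f_eq p_def sum_subtractf[symmetric] by (intro sum.cong) (simp_all add: algebra_simps)
  note parseval = integral_centered_expansion_square[OF D_prob D_sq measurable_ident_sets[OF D_borel]
      D_mean D_var, of "{..<n}" "\<lambda>T. if card T \<le> d then 0 else g T"]
  have integrable_error: "integrable (PiM {..<n} (\<lambda>_. D)) (\<lambda>x. (f x - p x)\<^sup>2)"
    using parseval(1) by (simp add: error_eq)
  have "(\<integral>x. (f x - p x)\<^sup>2 \<partial>PiM {..<n} (\<lambda>_. D)) =
      (\<Sum>T\<in>Pow {..<n}. (if card T \<le> d then 0 else g T)\<^sup>2 * (\<sigma>\<^sup>2) ^ card T)"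
    using parseval(2) by (simp add: error_eq)
  also have "\<dots> \<le> (\<sigma>\<^sup>2 / (1 - \<mu>\<^sup>2)) ^ d * (\<Sum>T\<in>Pow {..<n}. (g T)\<^sup>2 * (1 - \<mu>\<^sup>2) ^ card T)"
    using var_lt w_pos by (intro sum_truncated_weights_le) auto
  also have "\<dots> \<le> (\<sigma>\<^sup>2 / (1 - \<mu>\<^sup>2)) ^ d"
    using coefficient_bound w_pos var_lt by (intro mult_left_le) auto
  finally show ?thesis
    using poly_deg_le_truncated_centered_expansion integrable_error unfolding p_def[abs_def] by blast
qed

end
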